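(* Let $d=d(n)$ satisfy $12 \le d \le e^{\sqrt[3]{\log n}}$ and let $m = m(n,d) = \frac{\log n \,\log\log\log n}{\log d\, \log\log n}$. If $p=p(n) \ge 16520\, \frac{m\log(e\cdot 4130\, m)}{n}$, then for all sufficiently large $n$, the probability that $G(n,p)$ fails to satisfy property P2 is less than $e^{-2np}$, where P2 is the property: for every pair of disjoint vertex sets $A,B$ with $|A|,|B| \ge \frac{n}{4130m}$, there is at least one edge between $A$ and $B$.
   Context: $G(n,p)$ is the Erdős–Rényi random graph on vertex set of size $n$ in which each pair of vertices is an edge independently with probability $p$; $\log$ is the natural logarithm. *)

theory Defs
  imports Complex_Main
begin

definition all_edges :: "nat \<Rightarrow> nat set set" where
  "all_edges n = {e. \<exists>i j. i < j \<and> j < n \<and> e = {i, j}}"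

text \<open>Probability that G(n,p) (each potential edge present independently with
  probability p) has a property Q of its edge set E.\<close>
definition gnp_prob :: "nat \<Rightarrow> real \<Rightarrow> (nat set set \<Rightarrow> bool) \<Rightarrow> real" where
  "gnp_prob n p Q = (\<Sum>E\<in>Pow (all_edges n).
      if Q E then p ^ card E * (1 - p) ^ (card (all_edges n) - card E) else 0)"

definition m_param :: "nat \<Rightarrow> real \<Rightarrow> real" where
  "m_param n d = (ln (real n) * ln (ln (ln (real n)))) / (ln d * ln (ln (real n)))"

definition P2 :: "nat \<Rightarrow> real \<Rightarrow> nat set set \<Rightarrow> bool" where
  "P2 n m E = (\<forall>A B. A \<subseteq> {..<n} \<longrightarrow> B \<subseteq> {..<n} \<longrightarrow> A \<inter> B = {} \<longrightarrow>
      real (card A) \<ge> real n / (4130 * m) \<longrightarrow> real (card B) \<ge> real n / (4130 * m) \<longrightarrow>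
      (\<exists>a\<in>A. \<exists>b\<in>B. {a, b} \<in> E))"

end

theory Submission
  imports Defs "HOL-Real_Asymp.Real_Asymp"
begin

(* If P2 fails, two disjoint sets of size K = ceil(n/(4130m)) span no edge. A union bound
   over the at most (n choose K)^2 such pairs, each edgeless with probability
   (1-p)^(K^2) <= exp(-pK^2), together with (n choose K) <= (en/K)^K <= (4130em)^K, bounds the
   failure probability by exp(2KL - pK^2) with L = log(4130em). The hypothesis on p says
   pK >= 4L, so this is at most exp(-pK^2/2); and since 1 <= m <= log n for large n, K^2 > 4n. *)

lemma finite_all_edges: "finite (all_edges n)"
proof -
  have "all_edges n \<subseteq> Pow {..<n}" unfolding all_edges_def by auto
  thus ?thesis by (rule finite_subset) simp
qed

lemma gnp_prob_disjoint:
  assumes S: "S \<subseteq> all_edges n"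
  shows "gnp_prob n p (\<lambda>E. E \<inter> S = {}) = (1 - p) ^ card S"
proof -
  let ?U = "all_edges n"
  let ?q = "\<lambda>x. if x \<in> S then 0 else p"
  have fU: "finite ?U" by (rule finite_all_edges)
  have "gnp_prob n p (\<lambda>E. E \<inter> S = {}) = (\<Sum>X\<in>Pow ?U. prod ?q X * (\<Prod>x\<in>?U - X. 1 - p))"
    unfolding gnp_prob_def
  proof (rule sum.cong[OF refl])
    fix X assume X: "X \<in> Pow ?U"
    hence fX: "finite X" using fU finite_subset by auto
    have "prod ?q X = (if X \<inter> S = {} then p ^ card X else 0)"
    proof (cases "X \<inter> S = {}")
      case True
      hence "prod ?q X = (\<Prod>x\<in>X. p)" by (intro prod.cong) auto
      thus ?thesis using True by simp
    qed (use fX in \<open>auto intro: prod_zero\<close>)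
    moreover have "card (?U - X) = card ?U - card X" using X fX by (simp add: card_Diff_subset)
    ultimately show "(if X \<inter> S = {} then p ^ card X * (1 - p) ^ (card ?U - card X) else 0) =
        prod ?q X * (\<Prod>x\<in>?U - X. 1 - p)"
      by simp
  qed
  also have "\<dots> = (\<Prod>x\<in>?U. ?q x + (1 - p))"
    by (rule prod_add[OF fU, symmetric])
  also have "\<dots> = (\<Prod>x\<in>?U. if x \<in> S then 1 - p else 1)"
    by (intro prod.cong) auto
  also have "\<dots> = (1 - p) ^ card S"
    using prod.If_cases[OF fU, of "\<lambda>x. x \<in> S" "\<lambda>_. 1 - p" "\<lambda>_. 1"] S
    by (simp add: Int_absorb1)
  finally show ?thesis .
qed

lemma gnp_prob_union_bound:
  assumes "finite I" "0 \<le> p" "p \<le> 1"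
    and "\<And>E. Q E \<Longrightarrow> \<exists>i\<in>I. R i E"
  shows "gnp_prob n p Q \<le> (\<Sum>i\<in>I. gnp_prob n p (R i))"
proof -
  let ?w = "\<lambda>E. p ^ card E * (1 - p) ^ (card (all_edges n) - card E)"
  have w_nonneg: "0 \<le> ?w E" for E :: "nat set set" using assms(2,3) by simp
  have "gnp_prob n p Q \<le> (\<Sum>E\<in>Pow (all_edges n). \<Sum>i\<in>I. if R i E then ?w E else 0)"
    unfolding gnp_prob_def
  proof (rule sum_mono)
    fix E
    show "(if Q E then ?w E else 0) \<le> (\<Sum>i\<in>I. if R i E then ?w E else 0)"
    proof (cases "Q E")
      case True
      then obtain i where i: "i \<in> I" "R i E" using assms(4) by blast
      have "(if R i E then ?w E else 0) \<le> (\<Sum>i\<in>I. if R i E then ?w E else 0)"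
        by (rule member_le_sum[OF i(1)]) (use w_nonneg assms(1) in auto)
      thus ?thesis using True i by simp
    qed (use w_nonneg in \<open>auto intro!: sum_nonneg\<close>)
  qed
  also have "\<dots> = (\<Sum>i\<in>I. gnp_prob n p (R i))"
    unfolding gnp_prob_def by (rule sum.swap)
  finally show ?thesis .
qed

definition cross_edges :: "nat set \<Rightarrow> nat set \<Rightarrow> nat set set" where
  "cross_edges A B = (\<lambda>(a, b). {a, b}) ` (A \<times> B)"

lemma cross_edges_subset_all_edges:
  assumes "A \<subseteq> {..<n}" "B \<subseteq> {..<n}" "A \<inter> B = {}"
  shows "cross_edges A B \<subseteq> all_edges n"
proof
  fix e assume "e \<in> cross_edges A B"
  then obtain a b where ab: "a \<in> A" "b \<in> B" "e = {a, b}" unfolding cross_edges_def by auto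
  hence "a \<noteq> b" "a < n" "b < n" using assms by auto
  hence "a < b \<and> b < n \<and> e = {a, b} \<or> b < a \<and> a < n \<and> e = {b, a}"
    using ab(3) by (auto simp: insert_commute)
  thus "e \<in> all_edges n" unfolding all_edges_def by blast
qed

lemma card_cross_edges:
  assumes "A \<inter> B = {}"
  shows "card (cross_edges A B) = card A * card B"
proof -
  have "inj_on (\<lambda>(a, b). {a, b :: nat}) (A \<times> B)"
    unfolding inj_on_def using assms by (auto simp: doubleton_eq_iff)
  thus ?thesis unfolding cross_edges_def by (simp add: card_image card_cartesian_product)
qed

lemma gnp_prob_not_P2_le:
  assumes p: "0 \<le> p" "p \<le> 1"
    and K: "\<And>c::nat. real n / (4130 * m) \<le> real c \<Longrightarrow> K \<le> c"
  shows "gnp_prob n p (\<lambda>E. \<not> P2 n m E) \<le> real (n choose K)^2 * (1 - p)^(K * K)"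
proof -
  define C where "C = {A. A \<subseteq> {..<n} \<and> card A = K}"
  define I where "I = {(A, B). A \<in> C \<and> B \<in> C \<and> A \<inter> B = {}}"
  have "finite C" unfolding C_def by (rule finite_subset[of _ "Pow {..<n}"]) auto
  moreover have "card C = n choose K" unfolding C_def using n_subsets[of "{..<n}" K] by simp
  moreover have IC: "I \<subseteq> C \<times> C" unfolding I_def by auto
  ultimately have fin_I: "finite I" and card_I: "card I \<le> (n choose K)^2"
    using card_mono[OF _ IC] finite_subset
    by (auto simp: card_cartesian_product power2_eq_square)
  have "gnp_prob n p (\<lambda>E. \<not> P2 n m E)
      \<le> (\<Sum>i\<in>I. gnp_prob n p (\<lambda>E. E \<inter> cross_edges (fst i) (snd i) = {}))"
  proof (rule gnp_prob_union_bound[OF fin_I p])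
    fix E assume "\<not> P2 n m E"
    then obtain A B where AB: "A \<subseteq> {..<n}" "B \<subseteq> {..<n}" "A \<inter> B = {}"
      "real n / (4130 * m) \<le> real (card A)" "real n / (4130 * m) \<le> real (card B)"
      "\<forall>a\<in>A. \<forall>b\<in>B. {a, b} \<notin> E"
      unfolding P2_def by blast
    obtain A' where A': "A' \<subseteq> A" "card A' = K" using obtain_subset_with_card_n K[OF AB(4)] by metis
    obtain B' where B': "B' \<subseteq> B" "card B' = K" using obtain_subset_with_card_n K[OF AB(5)] by metis
    have "(A', B') \<in> I" unfolding I_def C_def using A' B' AB by auto
    moreover have "E \<inter> cross_edges A' B' = {}" unfolding cross_edges_def using A' B' AB(6) by auto
    ultimately show "\<exists>i\<in>I. E \<inter> cross_edges (fst i) (snd i) = {}"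
      by (intro bexI[of _ "(A', B')"]) simp_all
  qed
  also have "\<dots> = (\<Sum>i\<in>I. (1 - p)^(K * K))"
  proof (rule sum.cong[OF refl], clarify)
    fix A B assume "(A, B) \<in> I"
    hence "A \<subseteq> {..<n}" "B \<subseteq> {..<n}" "A \<inter> B = {}" "card A = K" "card B = K"
      unfolding I_def C_def by auto
    thus "gnp_prob n p (\<lambda>E. E \<inter> cross_edges (fst (A, B)) (snd (A, B)) = {}) = (1 - p)^(K * K)"
      by (simp add: gnp_prob_disjoint cross_edges_subset_all_edges card_cross_edges)
  qed
  also have "\<dots> \<le> real (n choose K)^2 * (1 - p)^(K * K)"
    using card_I p by (simp add: mult_right_mono flip: of_nat_power)
  finally show ?thesis .
qed

lemma power_le_exp_mult_fact: "real k ^ k \<le> exp (real k) * fact k"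
proof -
  have "(\<Sum>i\<in>{k}. real k ^ i /\<^sub>R fact i) \<le> (\<Sum>i. real k ^ i /\<^sub>R fact i)"
    by (rule sum_le_suminf[OF summable_exp_generic]) auto
  also have "\<dots> = exp (real k)" using exp_converges sums_unique by metis
  finally show ?thesis by (simp add: field_simps)
qed

lemma binomial_le_exp_mult_div_power:
  assumes "0 < k"
  shows "real (n choose k) \<le> (exp 1 * real n / real k) ^ k"
proof -
  have "real (n choose k) * fact k \<le> real n ^ k"
    using binomial_fact_pow[of n k] by (metis of_nat_fact of_nat_le_iff of_nat_mult of_nat_power)
  hence "real (n choose k) \<le> real n ^ k * (1 / fact k)" by (simp add: field_simps)
  also have "\<dots> \<le> real n ^ k * (exp (real k) / real k ^ k)"
    using power_le_exp_mult_fact[of k] assms by (intro mult_left_mono) (simp_all add: divide_simps)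
  also have "\<dots> = (exp 1 * real n / real k) ^ k"
    by (simp add: power_divide power_mult_distrib exp_of_nat_mult[symmetric] mult.commute)
  finally show ?thesis .
qed

lemma binomial_le_exp_mult_ln:
  assumes x: "0 < x" "x \<le> real k" and n: "0 < n"
  shows "real (n choose k) \<le> exp (real k * ln (exp 1 * real n / x))"
proof -
  have "0 < k" using x by linarith
  hence "real (n choose k) \<le> (exp 1 * real n / real k) ^ k"
    by (rule binomial_le_exp_mult_div_power)
  also have "\<dots> \<le> (exp 1 * real n / x) ^ k" using x by (intro power_mono divide_left_mono) auto
  also have "\<dots> = exp (real k * ln (exp 1 * real n / x))" using x n by (simp add: exp_of_nat_mult)
  finally show ?thesis .
qed

lemma one_minus_power_le_exp: "p \<le> 1 \<Longrightarrow> (1 - p) ^ k \<le> exp (- p * real k)"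
  using exp_ge_add_one_self[of "-p"]
  by (subst mult.commute, subst exp_of_nat_mult) (intro power_mono, auto)

lemma choose_sq_mult_power_lt_exp:
  fixes n K :: nat and c m p :: real
  assumes cm: "1 \<le> c * m" and K: "real n / (c * m) \<le> real K"
    and p: "4 * c * m * ln (exp 1 * c * m) / real n \<le> p" "p \<le> 1"
    and n: "4 * (c * m)^2 < real n"
  shows "real (n choose K)^2 * (1 - p)^(K * K) < exp (- 2 * real n * p)"
proof -
  define x where "x = real n / (c * m)"
  define L where "L = ln (exp 1 * c * m)"
  have cm_nz: "c \<noteq> 0" "m \<noteq> 0" using cm by auto
  have n_pos: "0 < real n" using n zero_le_power2[of "c * m"] by linarith
  have x_pos: "0 < x" unfolding x_def using n_pos cm by simp
  have x_le_K: "x \<le> real K" using K unfolding x_def .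
  have "1 * (c * m) < exp 1 * (c * m)" using cm by (intro mult_strict_right_mono) auto
  hence ecm: "1 < exp 1 * c * m" using cm by (simp add: mult.assoc)
  hence L_pos: "0 < L" unfolding L_def by (rule ln_gt_zero)
  have "4 * L = 4 * c * m * L / real n * x" unfolding x_def using n_pos cm_nz by (simp add: field_simps)
  also have "\<dots> \<le> p * x" using p(1) x_pos unfolding L_def by (intro mult_right_mono) auto
  finally have px: "4 * L \<le> p * x" .
  hence "0 < p * x" using L_pos by linarith
  hence p_pos: "0 < p" using x_pos by (rule zero_less_mult_pos2)
  have pK: "4 * L \<le> p * real K" using px mult_left_mono[OF x_le_K, of p] p_pos by linarith
  have "4 < real n / (c * m)^2" using n cm_nz by (simp add: less_divide_eq)
  hence "4 * real n < real n * (real n / (c * m)^2)"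
    by (metis mult.commute mult_strict_left_mono n_pos)
  also have "\<dots> = x^2" unfolding x_def by (simp add: power_divide power2_eq_square)
  also have "\<dots> \<le> (real K)^2" using x_le_K x_pos by (intro power_mono) auto
  finally have K_sq: "4 * real n < (real K)^2" .
  have "exp 1 * real n / x = exp 1 * c * m" unfolding x_def using n_pos cm_nz by (simp add: field_simps)
  hence "real (n choose K) \<le> exp (real K * L)"
    using binomial_le_exp_mult_ln[OF x_pos x_le_K, where n = n] n_pos unfolding L_def by simp
  hence "real (n choose K)^2 \<le> exp (real K * L)^2" by (intro power_mono) auto
  also have "\<dots> = exp (2 * real K * L)" by (simp add: exp_double[symmetric] mult.assoc)
  finally have choose_le: "real (n choose K)^2 \<le> exp (2 * real K * L)" .
  have "(1 - p)^(K * K) \<le> exp (- p * (real K)^2)"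
    using one_minus_power_le_exp[OF p(2), of "K * K"] by (simp add: power2_eq_square)
  with choose_le have "real (n choose K)^2 * (1 - p)^(K * K)
      \<le> exp (2 * real K * L) * exp (- p * (real K)^2)"
    using p(2) by (intro mult_mono) auto
  also have "\<dots> = exp (2 * real K * L - p * (real K)^2)" by (simp add: exp_add[symmetric])
  also have "\<dots> < exp (- 2 * real n * p)"
  proof -
    have "4 * L * real K \<le> p * real K * real K" using mult_right_mono[OF pK, of "real K"] by simp
    moreover have "p * (4 * real n) < p * (real K)^2" using mult_strict_left_mono[OF K_sq p_pos] .
    ultimately show ?thesis by (simp add: power2_eq_square algebra_simps)
  qed
  finally show ?thesis .
qed

lemma m_param_bounds:
  assumes d: "exp 1 \<le> d" "d \<le> exp (root 3 (ln (real n)))"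
    and ll: "0 < ln (ln (real n))" and lll: "0 < ln (ln (ln (real n)))"
    and root_le: "ln (real n) powr (1/3) * ln (ln (real n)) \<le> ln (real n) * ln (ln (ln (real n)))"
  shows "1 \<le> m_param n d \<and> m_param n d \<le> ln (real n)"
proof -
  define l where "l = ln (real n)"
  have "0 \<le> l" unfolding l_def by (cases "n = 0") auto
  moreover have "l \<noteq> 0" using ll unfolding l_def by auto
  ultimately have l_pos: "0 < l" by simp
  have ll_pos: "0 < ln l" using ll unfolding l_def .
  have lnd: "1 \<le> ln d" using d(1) by (smt (verit) exp_gt_zero ln_exp ln_le_cancel_iff)
  have "ln d \<le> root 3 l"
    using d ln_le_cancel_iff[of d "exp (root 3 l)"] unfolding l_def by (smt (verit) exp_gt_zero ln_exp)
  also have "\<dots> = l powr (1/3)" using l_pos by (simp add: root_powr_inverse)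
  finally have "ln d * ln l \<le> l * ln (ln l)"
    using ll_pos root_le unfolding l_def by (smt (verit) mult_right_mono)
  moreover have "ln (ln l) \<le> ln d * ln l"
  proof -
    have "ln (ln l) \<le> ln l" using ln_le_minus_one[OF ll_pos] by linarith
    also have "\<dots> \<le> ln d * ln l" using mult_right_mono[OF lnd, of "ln l"] ll_pos by simp
    finally show ?thesis .
  qed
  ultimately show ?thesis
    using ll_pos lnd l_pos unfolding m_param_def l_def[symmetric]
    by (simp add: divide_le_eq le_divide_eq mult_left_mono)
qed

lemma eventually_m_param_bounds:
  assumes "\<forall>\<^sub>F n in sequentially. exp 1 \<le> d n \<and> d n \<le> exp (root 3 (ln (real n)))"
  shows "\<forall>\<^sub>F n in sequentially. 1 \<le> m_param n (d n) \<and> m_param n (d n) \<le> ln (real n)"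
proof -
  have "\<forall>\<^sub>F n in sequentially. 0 < ln (ln (real n))" by real_asymp
  moreover have "\<forall>\<^sub>F n in sequentially. 0 < ln (ln (ln (real n)))" by real_asymp
  moreover have "\<forall>\<^sub>F n in sequentially.
      ln (real n) powr (1/3) * ln (ln (real n)) \<le> ln (real n) * ln (ln (ln (real n)))"
    by real_asymp
  ultimately show ?thesis using assms
    by eventually_elim (simp add: m_param_bounds)
qed

theorem lemma16:
  fixes d p :: "nat \<Rightarrow> real"
  assumes d_range: "\<forall>\<^sub>F n in sequentially. 12 \<le> d n \<and> d n \<le> exp (root 3 (ln (real n)))"
    and p_prob: "\<forall>\<^sub>F n in sequentially. 0 \<le> p n \<and> p n \<le> 1"
    and p_lower: "\<forall>\<^sub>F n in sequentially.
       p n \<ge> 16520 * (m_param n (d n) * ln (exp 1 * 4130 * m_param n (d n))) / real n"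
  shows "\<forall>\<^sub>F n in sequentially.
           gnp_prob n (p n) (\<lambda>E. \<not> P2 n (m_param n (d n)) E) < exp (- 2 * real n * p n)"
proof -
  have "\<forall>\<^sub>F n in sequentially. exp 1 \<le> d n \<and> d n \<le> exp (root 3 (ln (real n)))"
    using d_range exp_le by (auto elim: eventually_mono)
  note m_bounds = eventually_m_param_bounds[OF this]
  have "\<forall>\<^sub>F n in sequentially. 4 * (4130 * ln (real n))^2 < real n" by real_asymp
  from m_bounds this p_prob p_lower show ?thesis
  proof eventually_elim
    case (elim n)
    define m where "m = m_param n (d n)"
    have "(4130 * m)^2 \<le> (4130 * ln (real n))^2"
      using elim(1) by (intro power_mono) (auto simp: m_def)
    hence small_m: "4 * (4130 * m)^2 < real n" using elim(2) by linarith
    define K where "K = nat \<lceil>real n / (4130 * m)\<rceil>"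
    have K_ge: "real n / (4130 * m) \<le> real K" unfolding K_def by linarith
    have "gnp_prob n (p n) (\<lambda>E. \<not> P2 n m E) \<le> real (n choose K)^2 * (1 - p n)^(K * K)"
      using elim by (intro gnp_prob_not_P2_le) (auto simp: K_def nat_le_iff ceiling_le)
    also have "\<dots> < exp (- 2 * real n * p n)"
      using K_ge small_m elim(1,3,4)
      by (intro choose_sq_mult_power_lt_exp[where c = 4130 and m = m]) (auto simp: m_def mult.assoc)
    finally show ?case unfolding m_def .
  qed
qed

end
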